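(* Let $R\ge0$ and let $X$ be an $R$-rough geodesic metric space that is asymptotically $\mathrm{CAT}(0)$. Then $X$ is strongly shortcut.
   Context: A metric space is asymptotically $\mathrm{CAT}(0)$ if every asymptotic cone of it is $\mathrm{CAT}(0)$. Asymptotic cone: for a nonprincipal ultrafilter $\mathscr U$ on $\mathbb N$, basepoints $b^{(m)}\in X$ and scalars $s^{(m)}\to\infty$, take sequences $(x_m)$ with $d(x_m,b^{(m)})/s^{(m)}$ bounded, pseudometric $\lim_{\mathscr U} d(x_m,x'_m)/s^{(m)}$, and pass to the metric quotient. $X$ is $R$-rough geodesic if any $x_1,x_2$ are joined by $f\colon[0,\ell]\to X$, $\ell=d(x_1,x_2)$, $f(0)=x_1,f(\ell)=x_2$, with $|d(f(s),f(t))-|s-t||\le R$. An $R$-circle is a map $\alpha\colon S\to X$ from a Riemannian circle $S$ of length $|S|$ with $d(\alpha(p),\alpha(q))\le d_S(p,q)+R$; for $K>1$ it is $\frac1K$-almost isometric if $d(\alpha(p),\alpha(\bar p))\ge\frac1K\cdot\frac{|S|}2$ for all antipodal $p,\bar p\in S$. $X$ is strongly shortcut if for some $K>1$ there is a bound on the lengths of the $\frac1K$-almost isometric $R$-circles in $X$. *)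

theory Defs
  imports "HOL-Analysis.Analysis"
begin

definition geodesic_between :: "'b set \<Rightarrow> ('b \<Rightarrow> 'b \<Rightarrow> real) \<Rightarrow> 'b \<Rightarrow> 'b \<Rightarrow> (real \<Rightarrow> 'b) \<Rightarrow> bool" where
  "geodesic_between M d x y g \<longleftrightarrow>
     g ` {0..d x y} \<subseteq> M \<and> g 0 = x \<and> g (d x y) = y \<and>
     (\<forall>s\<in>{0..d x y}. \<forall>t\<in>{0..d x y}. d (g s) (g t) = \<bar>s - t\<bar>)"

definition geodesic_space :: "'b set \<Rightarrow> ('b \<Rightarrow> 'b \<Rightarrow> real) \<Rightarrow> bool" where
  "geodesic_space M d \<longleftrightarrow> (\<forall>x\<in>M. \<forall>y\<in>M. \<exists>g. geodesic_between M d x y g)"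

definition cmp_pt :: "real^2 \<Rightarrow> real^2 \<Rightarrow> real \<Rightarrow> real \<Rightarrow> real^2" where
  "cmp_pt a b l s = a + (if l = 0 then 0 else s / l) *\<^sub>R (b - a)"

definition CAT0_triangle_ineq ::
  "('b \<Rightarrow> 'b \<Rightarrow> real) \<Rightarrow> 'b \<Rightarrow> 'b \<Rightarrow> 'b \<Rightarrow> (real \<Rightarrow> 'b) \<Rightarrow> (real \<Rightarrow> 'b) \<Rightarrow> (real \<Rightarrow> 'b)
     \<Rightarrow> real^2 \<Rightarrow> real^2 \<Rightarrow> real^2 \<Rightarrow> bool" where
  "CAT0_triangle_ineq d x y z g1 g2 g3 xa ya za \<longleftrightarrow>
     (let sides = {(g1, xa, ya, d x y), (g2, ya, za, d y z), (g3, za, xa, d z x)} in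
      \<forall>(c1, a1, b1, l1)\<in>sides. \<forall>(c2, a2, b2, l2)\<in>sides.
        \<forall>s\<in>{0..l1}. \<forall>t\<in>{0..l2}.
          d (c1 s) (c2 t) \<le> dist (cmp_pt a1 b1 l1 s) (cmp_pt a2 b2 l2 t))"

definition CAT0 :: "'b set \<Rightarrow> ('b \<Rightarrow> 'b \<Rightarrow> real) \<Rightarrow> bool" where
  "CAT0 M d \<longleftrightarrow> geodesic_space M d \<and>
     (\<forall>x\<in>M. \<forall>y\<in>M. \<forall>z\<in>M. \<forall>g1 g2 g3.
        geodesic_between M d x y g1 \<and> geodesic_between M d y z g2 \<and> geodesic_between M d z x g3 \<longrightarrow>
        (\<forall>xa ya za. dist xa ya = d x y \<and> dist ya za = d y z \<and> dist za xa = d z x \<longrightarrow>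
           CAT0_triangle_ineq d x y z g1 g2 g3 xa ya za))"

definition nonprincipal_ultrafilter :: "nat filter \<Rightarrow> bool" where
  "nonprincipal_ultrafilter U \<longleftrightarrow> U \<noteq> bot \<and>
     (\<forall>P. eventually P U \<or> eventually (\<lambda>m. \<not> P m) U) \<and>
     (\<forall>n. eventually (\<lambda>m. m \<noteq> n) U)"

definition cone_seqs :: "(nat \<Rightarrow> 'a::metric_space) \<Rightarrow> (nat \<Rightarrow> real) \<Rightarrow> (nat \<Rightarrow> 'a) set" where
  "cone_seqs b s = {x. bounded (range (\<lambda>m. dist (x m) (b m) / s m))}"

definition cone_pdist :: "nat filter \<Rightarrow> (nat \<Rightarrow> real) \<Rightarrow> (nat \<Rightarrow> 'a::metric_space) \<Rightarrow> (nat \<Rightarrow> 'a) \<Rightarrow> real" where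
  "cone_pdist U s x y = Lim U (\<lambda>m. dist (x m) (y m) / s m)"

definition cone_carrier :: "nat filter \<Rightarrow> (nat \<Rightarrow> 'a::metric_space) \<Rightarrow> (nat \<Rightarrow> real) \<Rightarrow> (nat \<Rightarrow> 'a) set set" where
  "cone_carrier U b s = (\<lambda>x. {y \<in> cone_seqs b s. cone_pdist U s x y = 0}) ` cone_seqs b s"

definition cone_dist :: "nat filter \<Rightarrow> (nat \<Rightarrow> real) \<Rightarrow> (nat \<Rightarrow> 'a::metric_space) set \<Rightarrow> (nat \<Rightarrow> 'a) set \<Rightarrow> real" where
  "cone_dist U s A B = cone_pdist U s (SOME x. x \<in> A) (SOME y. y \<in> B)"

definition asymptotically_CAT0 :: "'a::metric_space itself \<Rightarrow> bool" where
  "asymptotically_CAT0 _ \<longleftrightarrow>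
     (\<forall>U (b :: nat \<Rightarrow> 'a) (s :: nat \<Rightarrow> real).
        nonprincipal_ultrafilter U \<and> filterlim s at_top sequentially \<longrightarrow>
        CAT0 (cone_carrier U b s) (cone_dist U s))"

definition rough_geodesic :: "real \<Rightarrow> 'a::metric_space itself \<Rightarrow> bool" where
  "rough_geodesic R _ \<longleftrightarrow>
     (\<forall>x1 x2 :: 'a. \<exists>f :: real \<Rightarrow> 'a. f 0 = x1 \<and> f (dist x1 x2) = x2 \<and>
        (\<forall>s\<in>{0..dist x1 x2}. \<forall>t\<in>{0..dist x1 x2}. \<bar>dist (f s) (f t) - \<bar>s - t\<bar>\<bar> \<le> R))"

text \<open>Riemannian circle of length L > 0 modelled as R/LZ; a map from it is an L-periodic
  function on the reals. Intrinsic distance on the circle:\<close>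
definition circ_dist :: "real \<Rightarrow> real \<Rightarrow> real \<Rightarrow> real" where
  "circ_dist L p q = (INF k::int. \<bar>p - q - of_int k * L\<bar>)"

definition R_circle :: "real \<Rightarrow> real \<Rightarrow> (real \<Rightarrow> 'a::metric_space) \<Rightarrow> bool" where
  "R_circle R L \<alpha> \<longleftrightarrow> L > 0 \<and> (\<forall>p. \<alpha> (p + L) = \<alpha> p) \<and>
     (\<forall>p q. dist (\<alpha> p) (\<alpha> q) \<le> circ_dist L p q + R)"

definition almost_isometric :: "real \<Rightarrow> real \<Rightarrow> (real \<Rightarrow> 'a::metric_space) \<Rightarrow> bool" where
  "almost_isometric K L \<alpha> \<longleftrightarrow> (\<forall>p. dist (\<alpha> p) (\<alpha> (p + L / 2)) \<ge> (1 / K) * (L / 2))"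

definition strongly_shortcut :: "'a::metric_space itself \<Rightarrow> bool" where
  "strongly_shortcut _ \<longleftrightarrow>
     (\<exists>K > 1. \<forall>R \<ge> 0. \<exists>B. \<forall>L (\<alpha> :: real \<Rightarrow> 'a).
        R_circle R L \<alpha> \<and> almost_isometric K L \<alpha> \<longrightarrow> L \<le> B)"

end

theory Submission
  imports Defs
begin

text \<open>If X is not strongly shortcut, then for constants K n tending to 1 there are
  1/(K n)-almost isometric (r n)-circles whose lengths L n satisfy r n / L n \<longrightarrow> 0.
  Rescaling the n-th circle by 1 / L n and passing to the asymptotic cone with scales L n
  yields a 1-Lipschitz loop c of length 1 whose antipodal points are at distance at
  least 1/2. Then both halves of c are geodesics between c 0 and c (1/2), and the CAT(0)
  inequality for this bigon forces them to coincide; but c (1/4) and c (3/4) are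
  antipodal, hence at distance at least 1/2.\<close>

section \<open>Ultrafilters\<close>

lemma ultrafilter_exists_le:
  fixes F :: "'a filter"
  assumes "F \<noteq> bot"
  obtains U where "U \<le> F" "U \<noteq> bot" "\<And>P. eventually P U \<or> eventually (\<lambda>x. \<not> P x) U"
proof -
  let ?A = "{G. G \<noteq> bot \<and> G \<le> F}"
  have "partial_order_on ?A (relation_of (\<lambda>G H. H \<le> G) ?A)"
    by (rule partial_order_on_relation_ofI) auto
  then obtain U where U: "U \<in> ?A" and maximal: "\<And>G. G \<in> ?A \<Longrightarrow> G \<le> U \<Longrightarrow> G = U"
  proof (rule predicate_Zorn[elim_format])
    fix C assume C: "C \<in> Chains (relation_of (\<lambda>G H. H \<le> G) ?A)"
    then have sub: "C \<subseteq> ?A" and chain: "\<And>G H. G \<in> C \<Longrightarrow> H \<in> C \<Longrightarrow> G \<le> H \<or> H \<le> G"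
      by (auto simp: Chains_def relation_of_def)
    show "\<exists>B\<in>?A. \<forall>G\<in>C. B \<le> G"
    proof (cases "C = {}")
      case True
      then show ?thesis using assms by auto
    next
      case False
      have "\<exists>B\<in>C. B \<le> inf G H" if "G \<in> C" "H \<in> C" for G H
        using chain[OF that] that by (metis inf_absorb1 inf_absorb2 order_refl)
      then have "eventually P (Inf C) \<longleftrightarrow> (\<exists>G\<in>C. eventually P G)" for P
        using False by (intro eventually_Inf_base)
      then have "Inf C \<noteq> bot"
        using sub by (auto simp: trivial_limit_def)
      moreover obtain G where "G \<in> C"
        using False by blast
      then have "Inf C \<le> F"
        using sub by (blast intro: Inf_lower2)
      ultimately show ?thesis by (auto intro: Inf_lower)
    qed
  qed auto
  \<comment> \<open>by maximality, U absorbs the principal filter of every P it does not refute\<close>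
  have "eventually P U" if "\<not> eventually (\<lambda>x. \<not> P x) U" for P
  proof -
    have "inf U (principal {x. P x}) \<noteq> bot"
      using that by (simp add: trivial_limit_def eventually_inf_principal)
    then have "inf U (principal {x. P x}) = U"
      using U by (intro maximal) (auto intro: le_infI1)
    moreover have "eventually P (inf U (principal {x. P x}))"
      by (simp add: eventually_inf_principal)
    ultimately show ?thesis
      by simp
  qed
  then show thesis
    using U by (intro that[of U]) auto
qed

lemma nonprincipal_ultrafilter_exists: "\<exists>U. nonprincipal_ultrafilter U"
proof -
  obtain U :: "nat filter" where U: "U \<le> sequentially" "U \<noteq> bot"
    "\<And>P. eventually P U \<or> eventually (\<lambda>x. \<not> P x) U"
    using ultrafilter_exists_le[of sequentially] by auto
  have "eventually (\<lambda>m. m \<noteq> n) U" for n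
    using U(1) by (rule filter_leD) (auto intro: eventually_sequentiallyI[of "Suc n"])
  then show ?thesis
    using U unfolding nonprincipal_ultrafilter_def by blast
qed

lemma nonprincipal_ultrafilter_le_sequentially:
  assumes "nonprincipal_ultrafilter U"
  shows "U \<le> sequentially"
proof -
  have "eventually (\<lambda>m. n \<le> m) U" for n
  proof (induction n)
    case (Suc n)
    moreover have "eventually (\<lambda>m. m \<noteq> n) U"
      using assms unfolding nonprincipal_ultrafilter_def by blast
    ultimately show ?case by eventually_elim auto
  qed simp
  then show ?thesis by (simp add: le_sequentially)
qed

lemma nonprincipal_ultrafilter_tendsto_Lim:
  fixes f :: "nat \<Rightarrow> real"
  assumes U: "nonprincipal_ultrafilter U" and f: "bounded (range f)"
  shows "(f \<longlongrightarrow> Lim U f) U"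
proof -
  have U_proper: "U \<noteq> bot" and ultra: "\<And>P. eventually P U \<or> eventually (\<lambda>m. \<not> P m) U"
    using U unfolding nonprincipal_ultrafilter_def by blast+
  obtain B where "\<And>m. f m \<in> cball 0 B"
    using f unfolding bounded_iff by fastforce
  then obtain l where l: "inf (nhds l) (filtermap f U) \<noteq> bot"
    using compact_filter[THEN iffD1, OF compact_cball, rule_format, of "filtermap f U" 0 B] U_proper
    by (auto simp: eventually_filtermap filtermap_bot_iff)
  have "(f \<longlongrightarrow> l) U"
    unfolding tendsto_def
  proof (intro allI impI)
    fix S :: "real set" assume "open S" "l \<in> S"
    then have "eventually (\<lambda>y. y \<in> S) (nhds l)"
      by (rule eventually_nhds_in_open)
    then have "\<not> eventually (\<lambda>y. y \<notin> S) (filtermap f U)"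
      using l by (auto simp: trivial_limit_def eventually_inf dest: eventually_conj)
    then show "eventually (\<lambda>m. f m \<in> S) U"
      using ultra by (auto simp: eventually_filtermap)
  qed
  then show ?thesis
    using U_proper by (simp add: tendsto_Lim)
qed

section \<open>The asymptotic cone\<close>

definition cone_class ::
    "nat filter \<Rightarrow> (nat \<Rightarrow> 'a::metric_space) \<Rightarrow> (nat \<Rightarrow> real) \<Rightarrow> (nat \<Rightarrow> 'a) \<Rightarrow> (nat \<Rightarrow> 'a) set"
  where
  "cone_class U b s x = {y \<in> cone_seqs b s. cone_pdist U s x y = 0}"

lemma cone_carrier_eq: "cone_carrier U b s = cone_class U b s ` cone_seqs b s"
  unfolding cone_carrier_def cone_class_def ..

lemma cone_pdist_commute: "cone_pdist U s x y = cone_pdist U s y x"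
  unfolding cone_pdist_def by (simp add: dist_commute)

context
  fixes U :: "nat filter" and s :: "nat \<Rightarrow> real" and b :: "nat \<Rightarrow> 'a::metric_space"
  assumes U: "nonprincipal_ultrafilter U" and s_nonneg: "eventually (\<lambda>m. 0 \<le> s m) U"
begin

lemma cone_pdist_self: "cone_pdist U s x x = 0"
  using U unfolding cone_pdist_def nonprincipal_ultrafilter_def by (simp add: tendsto_Lim)

lemma cone_seqs_dist_bounded:
  assumes "x \<in> cone_seqs b s" "y \<in> cone_seqs b s"
  shows "bounded (range (\<lambda>m. dist (x m) (y m) / s m))"
proof -
  obtain B1 where B1: "\<And>m. \<bar>dist (x m) (b m) / s m\<bar> \<le> B1"
    using assms(1) unfolding cone_seqs_def bounded_iff by auto
  obtain B2 where B2: "\<And>m. \<bar>dist (y m) (b m) / s m\<bar> \<le> B2"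
    using assms(2) unfolding cone_seqs_def bounded_iff by auto
  have "\<bar>dist (x m) (y m) / s m\<bar> \<le> B1 + B2" for m
  proof -
    have "\<bar>dist (x m) (y m) / s m\<bar> \<le> (dist (x m) (b m) + dist (y m) (b m)) / \<bar>s m\<bar>"
      by (simp add: divide_right_mono dist_triangle2)
    also have "\<dots> = \<bar>dist (x m) (b m) / s m\<bar> + \<bar>dist (y m) (b m) / s m\<bar>"
      by (simp add: add_divide_distrib)
    finally show ?thesis
      using B1[of m] B2[of m] by linarith
  qed
  then show ?thesis
    unfolding bounded_iff by auto
qed

lemma cone_pdist_tendsto:
  assumes "x \<in> cone_seqs b s" "y \<in> cone_seqs b s"
  shows "((\<lambda>m. dist (x m) (y m) / s m) \<longlongrightarrow> cone_pdist U s x y) U"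
  unfolding cone_pdist_def
  using nonprincipal_ultrafilter_tendsto_Lim[OF U cone_seqs_dist_bounded[OF assms]] .

lemma cone_pdist_triangle:
  assumes "x \<in> cone_seqs b s" "y \<in> cone_seqs b s" "z \<in> cone_seqs b s"
  shows "cone_pdist U s x z \<le> cone_pdist U s x y + cone_pdist U s y z"
proof (rule tendsto_le)
  show "U \<noteq> bot"
    using U unfolding nonprincipal_ultrafilter_def by blast
  show "((\<lambda>m. dist (x m) (y m) / s m + dist (y m) (z m) / s m)
      \<longlongrightarrow> cone_pdist U s x y + cone_pdist U s y z) U"
    using assms by (intro tendsto_add cone_pdist_tendsto)
  show "((\<lambda>m. dist (x m) (z m) / s m) \<longlongrightarrow> cone_pdist U s x z) U"
    using assms by (intro cone_pdist_tendsto)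
  show "eventually (\<lambda>m. dist (x m) (z m) / s m \<le> dist (x m) (y m) / s m + dist (y m) (z m) / s m) U"
    using s_nonneg
    by eventually_elim (simp add: add_divide_distrib[symmetric] divide_right_mono dist_triangle)
qed

lemma cone_dist_cone_class:
  assumes "x \<in> cone_seqs b s" "y \<in> cone_seqs b s"
  shows "cone_dist U s (cone_class U b s x) (cone_class U b s y) = cone_pdist U s x y"
proof -
  define x' where "x' = (SOME x'. x' \<in> cone_class U b s x)"
  define y' where "y' = (SOME y'. y' \<in> cone_class U b s y)"
  have "x \<in> cone_class U b s x" "y \<in> cone_class U b s y"
    using assms cone_pdist_self unfolding cone_class_def by auto
  then have "x' \<in> cone_class U b s x" "y' \<in> cone_class U b s y"
    unfolding x'_def y'_def some_in_eq by blast+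
  then have x': "x' \<in> cone_seqs b s" "cone_pdist U s x x' = 0"
    and y': "y' \<in> cone_seqs b s" "cone_pdist U s y y' = 0"
    unfolding cone_class_def by auto
  have "cone_pdist U s x' y' = cone_pdist U s x y"
    using cone_pdist_triangle[OF x'(1) assms(1) y'(1)] cone_pdist_triangle[OF assms y'(1)]
      cone_pdist_triangle[OF assms(1) x'(1) assms(2)] cone_pdist_triangle[OF x'(1) y'(1) assms(2)]
      x' y' cone_pdist_commute[of U s x x'] cone_pdist_commute[of U s y y']
    by linarith
  then show ?thesis
    unfolding cone_dist_def x'_def y'_def .
qed

end

section \<open>Antipodal loops in CAT(0) spaces\<close>

lemma lipschitz_loop_isometric_on_half_arcs:
  fixes D :: "real \<Rightarrow> real \<Rightarrow> real"
  assumes lip: "\<And>t u. D t u \<le> \<bar>t - u\<bar>"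
    and antipodal: "\<And>p. 1/2 \<le> D p (p + 1/2)"
    and triangle: "\<And>t u v. D t v \<le> D t u + D u v"
    and sym: "\<And>t u. D t u = D u t"
    and "a \<in> {0..1/2}" "b \<in> {0..1/2}"
  shows "D (p + a) (p + b) = \<bar>a - b\<bar>"
proof -
  have ordered: "D (p + a) (p + b) = b - a" if "0 \<le> a" "a \<le> b" "b \<le> 1/2" for a b
  proof -
    have "D p (p + a) \<le> a" "D (p + a) (p + b) \<le> b - a" "D (p + b) (p + 1/2) \<le> 1/2 - b"
      using lip[of p "p + a"] lip[of "p + a" "p + b"] lip[of "p + b" "p + 1/2"] that by simp_all
    moreover have "1/2 \<le> D p (p + a) + D (p + a) (p + b) + D (p + b) (p + 1/2)"
      using antipodal[of p] triangle[of p "p + 1/2" "p + a"] triangle[of "p + a" "p + 1/2" "p + b"]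
      by linarith
    ultimately show ?thesis by linarith
  qed
  show ?thesis
  proof (cases "a \<le> b")
    case True
    then show ?thesis using ordered[of a b] assms(5,6) by simp
  next
    case False
    then show ?thesis using ordered[of b a] assms(5,6) sym[of "p + a"] by simp
  qed
qed

lemma CAT0_geodesic_bigon:
  assumes cat: "CAT0 M d" and P: "P \<in> M" and Q: "Q \<in> M"
    and dPQ: "0 \<le> d P Q" "d Q P = d P Q" and dQQ: "d Q Q = 0"
    and g: "geodesic_between M d P Q g" and h: "geodesic_between M d Q P h"
    and s: "s \<in> {0..d P Q}"
  shows "d (g s) (h (d P Q - s)) \<le> 0"
proof -
  let ?l = "d P Q"
  obtain v :: "real^2" where v: "norm v = ?l"
    using vector_choose_size dPQ(1) by blast
  have "geodesic_between M d Q Q (\<lambda>_. Q)"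
    using Q dQQ unfolding geodesic_between_def by simp
  then have "\<forall>xa ya za. dist xa ya = d P Q \<and> dist ya za = d Q Q \<and> dist za xa = d Q P \<longrightarrow>
      CAT0_triangle_ineq d P Q Q g (\<lambda>_. Q) h xa ya za"
    using cat P Q g h unfolding CAT0_def by blast
  then have "CAT0_triangle_ineq d P Q Q g (\<lambda>_. Q) h 0 v v"
    using v dPQ dQQ by (simp add: dist_norm)
  then have "\<forall>s\<in>{0..?l}. \<forall>t\<in>{0..?l}. d (g s) (h t) \<le> dist (cmp_pt 0 v ?l s) (cmp_pt v 0 ?l t)"
    unfolding CAT0_triangle_ineq_def Let_def dPQ(2) by simp
  then have "d (g s) (h (?l - s)) \<le> dist (cmp_pt 0 v ?l s) (cmp_pt v 0 ?l (?l - s))"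
    using s by simp
  \<comment> \<open>the comparison triangle 0, v, v is a doubly traversed segment\<close>
  also have "cmp_pt 0 v ?l s = cmp_pt v 0 ?l (?l - s)"
  proof (cases "?l = 0")
    case True
    then show ?thesis using v by (simp add: cmp_pt_def)
  next
    case False
    then have "1 - (?l - s) / ?l = s / ?l"
      by (simp add: field_simps)
    then have "(s / ?l) *\<^sub>R v = v - ((?l - s) / ?l) *\<^sub>R v"
      by (metis scaleR_diff_left scaleR_one)
    then show ?thesis
      using False by (simp add: cmp_pt_def)
  qed
  finally show ?thesis by simp
qed

lemma CAT0_no_antipodal_loop:
  assumes cat: "CAT0 M d" and c: "\<And>t. c t \<in> M" and closed: "c 1 = c 0"
    and lip: "\<And>t u. d (c t) (c u) \<le> \<bar>t - u\<bar>"
    and antipodal: "\<And>p. 1/2 \<le> d (c p) (c (p + 1/2))"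
    and triangle: "\<And>t u v. d (c t) (c v) \<le> d (c t) (c u) + d (c u) (c v)"
    and sym: "\<And>t u. d (c t) (c u) = d (c u) (c t)"
  shows False
proof -
  have iso: "d (c (p + a)) (c (p + b)) = \<bar>a - b\<bar>" if "a \<in> {0..1/2}" "b \<in> {0..1/2}" for p a b
    using lip antipodal triangle sym that
    by (rule lipschitz_loop_isometric_on_half_arcs[where D = "\<lambda>t u. d (c t) (c u)"])
  have half: "d (c 0) (c (1/2)) = 1/2" "d (c (1/2)) (c 0) = 1/2"
    using iso[of 0 "1/2" 0] sym[of 0 "1/2"] by simp_all
  have zero: "d (c (1/2)) (c (1/2)) = 0"
    using iso[of 0 0 "1/2"] by simp
  have first_half: "geodesic_between M d (c 0) (c (1/2)) c"
    unfolding geodesic_between_def half using c iso[of _ _ 0] by auto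
  have second_half: "geodesic_between M d (c (1/2)) (c 0) (\<lambda>t. c (1/2 + t))"
    unfolding geodesic_between_def half using c closed iso[of _ _ "1/2"] by auto
  have "d (c (1/4)) (c (1/2 + (1/2 - 1/4))) \<le> 0"
    using CAT0_geodesic_bigon[OF cat c c _ _ _ first_half second_half, of "1/4"]
      half zero by simp
  moreover have "1/2 \<le> d (c (1/4)) (c (1/2 + (1/2 - 1/4)))"
    using antipodal[of "1/4"] by simp
  ultimately show False by simp
qed

section \<open>Rescaled almost isometric circles\<close>

lemma circ_dist_le_abs: "circ_dist L p q \<le> \<bar>p - q\<bar>"
proof -
  have "bdd_below (range (\<lambda>k::int. \<bar>p - q - of_int k * L\<bar>))"
    by (rule bdd_belowI[where m = 0]) auto
  then have "circ_dist L p q \<le> \<bar>p - q - of_int 0 * L\<bar>"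
    unfolding circ_dist_def by (rule cINF_lower) simp
  then show ?thesis by simp
qed

lemma R_circle_rescaled_dist_le:
  assumes "R_circle R L \<alpha>"
  shows "dist (\<alpha> (t * L)) (\<alpha> (u * L)) / L \<le> \<bar>t - u\<bar> + R / L"
proof -
  have L: "0 < L"
    using assms unfolding R_circle_def by simp
  have "dist (\<alpha> (t * L)) (\<alpha> (u * L)) \<le> circ_dist L (t * L) (u * L) + R"
    using assms unfolding R_circle_def by blast
  also have "\<dots> \<le> \<bar>t * L - u * L\<bar> + R"
    using circ_dist_le_abs by simp
  also have "\<dots> = \<bar>t - u\<bar> * L + R"
    using L by (simp add: abs_mult left_diff_distrib[symmetric])
  finally show ?thesis
    using L by (simp add: field_simps)
qed

lemma almost_isometric_rescaled_dist_ge: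
  assumes "almost_isometric K L \<alpha>" "0 < L"
  shows "1 / (2 * K) \<le> dist (\<alpha> (p * L)) (\<alpha> ((p + 1/2) * L)) / L"
proof -
  have "(p + 1/2) * L = p * L + L / 2"
    by (simp add: algebra_simps)
  then have "1 / K * (L / 2) \<le> dist (\<alpha> (p * L)) (\<alpha> ((p + 1/2) * L))"
    using assms(1) unfolding almost_isometric_def by simp
  then have "1 / K * (L / 2) / L \<le> dist (\<alpha> (p * L)) (\<alpha> ((p + 1/2) * L)) / L"
    by (rule divide_right_mono) (use assms(2) in simp)
  moreover have "1 / K * (L / 2) / L = 1 / (2 * K)"
    using assms(2) by simp
  ultimately show ?thesis
    by simp
qed

lemma not_strongly_shortcut_circles:
  assumes "\<not> strongly_shortcut TYPE('a::metric_space)"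
  obtains r L and \<alpha> :: "nat \<Rightarrow> real \<Rightarrow> 'a::metric_space" and K
  where "\<And>n. R_circle (r n) (L n) (\<alpha> n)" "\<And>n. almost_isometric (K n) (L n) (\<alpha> n)"
    and "K \<longlonglongrightarrow> 1" "(\<lambda>n. r n / L n) \<longlonglongrightarrow> 0" "filterlim L at_top sequentially"
proof -
  define K where "K n = 1 + 1 / real (Suc n)" for n
  have "\<exists>r' L' (\<alpha>' :: real \<Rightarrow> 'a). 0 \<le> r' \<and> R_circle r' L' \<alpha>' \<and> almost_isometric (K n) L' \<alpha>'
      \<and> real (Suc n) * (r' + 1) < L'" for n
  proof -
    have "1 < K n"
      unfolding K_def by simp
    then obtain r' where "0 \<le> r'"
      "\<forall>B. \<exists>L' (\<alpha>' :: real \<Rightarrow> 'a). R_circle r' L' \<alpha>' \<and> almost_isometric (K n) L' \<alpha>' \<and> B < L'"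
      using assms unfolding strongly_shortcut_def by (meson not_le)
    then show ?thesis by blast
  qed
  then obtain r L and \<alpha> :: "nat \<Rightarrow> real \<Rightarrow> 'a" where r: "\<And>n. 0 \<le> r n"
    and circle: "\<And>n. R_circle (r n) (L n) (\<alpha> n)" and almost: "\<And>n. almost_isometric (K n) (L n) (\<alpha> n)"
    and long: "\<And>n. real (Suc n) * (r n + 1) < L n"
    by metis
  have inverse_Suc: "(\<lambda>n. 1 / real (Suc n)) \<longlonglongrightarrow> 0"
    using LIMSEQ_inverse_real_of_nat by (simp add: inverse_eq_divide)
  have K_lim: "K \<longlonglongrightarrow> 1"
    unfolding K_def using tendsto_add[OF tendsto_const inverse_Suc, of 1] by simp
  have RL_lim: "(\<lambda>n. r n / L n) \<longlonglongrightarrow> 0"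
  proof (rule tendsto_sandwich[OF _ _ tendsto_const inverse_Suc])
    have "real (Suc n) * r n \<le> L n" for n
      using long[of n] by (simp add: algebra_simps)
    moreover have "0 < L n" for n
      using circle[of n] unfolding R_circle_def by simp
    ultimately show "\<forall>\<^sub>F n in sequentially. r n / L n \<le> 1 / real (Suc n)"
      and "\<forall>\<^sub>F n in sequentially. 0 \<le> r n / L n"
      using r by (simp_all add: field_simps)
  qed
  have L_lim: "filterlim L at_top sequentially"
  proof (rule filterlim_at_top_mono[OF filterlim_real_sequentially])
    have "real n \<le> L n" for n
    proof -
      have "0 \<le> real n * r n"
        using r[of n] by simp
      moreover have "real (Suc n) * (r n + 1) = real n * r n + real n + r n + 1"
        by (simp add: algebra_simps)
      ultimately show ?thesis
        using long[of n] r[of n] by linarith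
    qed
    then show "\<forall>\<^sub>F n in sequentially. real n \<le> L n"
      by simp
  qed
  show thesis
    by (rule that[OF circle almost K_lim RL_lim L_lim])
qed

lemma rescaled_circles_cone_loop:
  fixes \<alpha> :: "nat \<Rightarrow> real \<Rightarrow> 'a::metric_space"
  assumes U: "nonprincipal_ultrafilter U"
    and circle: "\<And>m. R_circle (r m) (L m) (\<alpha> m)" and almost: "\<And>m. almost_isometric (K m) (L m) (\<alpha> m)"
    and K: "K \<longlonglongrightarrow> 1" and RL: "(\<lambda>m. r m / L m) \<longlonglongrightarrow> 0"
    and x: "\<And>t m. x t m = \<alpha> m (t * L m)"
  shows "x t \<in> cone_seqs (x 0) L"
    and "cone_pdist U L (x t) (x u) \<le> \<bar>t - u\<bar>"
    and "1/2 \<le> cone_pdist U L (x p) (x (p + 1/2))"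
    and "x 1 = x 0"
proof -
  have L: "0 < L m" for m
    using circle unfolding R_circle_def by simp
  have U_proper: "U \<noteq> bot"
    using U unfolding nonprincipal_ultrafilter_def by blast
  have L_nonneg: "eventually (\<lambda>m. 0 \<le> L m) U"
    using L by (simp add: less_imp_le)
  have upper: "dist (x t m) (x u m) / L m \<le> \<bar>t - u\<bar> + r m / L m" for t u m
    unfolding x using R_circle_rescaled_dist_le[OF circle] .
  have lower: "1 / (2 * K m) \<le> dist (x p m) (x (p + 1/2) m) / L m" for p m
    unfolding x using almost_isometric_rescaled_dist_ge[OF almost L] .
  obtain B where B: "\<And>m. norm (r m / L m) \<le> B"
    using convergent_imp_Bseq[OF convergentI[OF RL]] unfolding Bseq_def by blast
  show x_cone: "x t \<in> cone_seqs (x 0) L" for t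
  proof -
    have "\<bar>dist (x t m) (x 0 m) / L m\<bar> \<le> \<bar>t\<bar> + B" for m
      using upper[of t m 0] B[of m] L[of m] abs_ge_self[of "r m / L m"] by simp
    then show ?thesis
      unfolding cone_seqs_def bounded_iff by auto
  qed
  have RL_U: "((\<lambda>m. r m / L m) \<longlongrightarrow> 0) U"
    using RL nonprincipal_ultrafilter_le_sequentially[OF U] by (rule tendsto_mono[rotated])
  have K_U: "(K \<longlongrightarrow> 1) U"
    using K nonprincipal_ultrafilter_le_sequentially[OF U] by (rule tendsto_mono[rotated])
  show "cone_pdist U L (x t) (x u) \<le> \<bar>t - u\<bar>"
  proof (rule tendsto_le[OF U_proper])
    show "((\<lambda>m. \<bar>t - u\<bar> + r m / L m) \<longlongrightarrow> \<bar>t - u\<bar>) U"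
      using tendsto_add[OF tendsto_const RL_U] by simp
    show "((\<lambda>m. dist (x t m) (x u m) / L m) \<longlongrightarrow> cone_pdist U L (x t) (x u)) U"
      by (rule cone_pdist_tendsto[OF U L_nonneg x_cone x_cone])
  qed (use upper in simp)
  show "1/2 \<le> cone_pdist U L (x p) (x (p + 1/2))"
  proof (rule tendsto_le[OF U_proper])
    show "((\<lambda>m. 1 / (2 * K m)) \<longlongrightarrow> 1/2) U"
    proof -
      have "((\<lambda>m. 2 * K m) \<longlongrightarrow> 2 * 1) U"
        using K_U by (rule tendsto_mult_left)
      then have "((\<lambda>m. 1 / (2 * K m)) \<longlongrightarrow> 1 / (2 * 1)) U"
        by (rule tendsto_divide[OF tendsto_const]) simp
      then show ?thesis
        by simp
    qed
    show "((\<lambda>m. dist (x p m) (x (p + 1/2) m) / L m) \<longlongrightarrow> cone_pdist U L (x p) (x (p + 1/2))) U"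
      by (rule cone_pdist_tendsto[OF U L_nonneg x_cone x_cone])
  qed (use lower in simp)
  show "x 1 = x 0"
  proof
    fix m
    have "\<alpha> m (0 + L m) = \<alpha> m 0"
      using circle[of m] unfolding R_circle_def by blast
    then show "x 1 m = x 0 m"
      unfolding x by simp
  qed
qed

lemma CAT0_cone_no_rescaled_circles:
  fixes \<alpha> :: "nat \<Rightarrow> real \<Rightarrow> 'a::metric_space"
  assumes U: "nonprincipal_ultrafilter U"
    and circle: "\<And>m. R_circle (r m) (L m) (\<alpha> m)" and almost: "\<And>m. almost_isometric (K m) (L m) (\<alpha> m)"
    and K: "K \<longlonglongrightarrow> 1" and RL: "(\<lambda>m. r m / L m) \<longlonglongrightarrow> 0"
    and cat: "CAT0 (cone_carrier U (\<lambda>m. \<alpha> m 0) L) (cone_dist U L)"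
  shows False
proof -
  define x where "x t m = \<alpha> m (t * L m)" for t m
  define c where "c t = cone_class U (x 0) L (x t)" for t
  note loop = rescaled_circles_cone_loop[OF U circle almost K RL x_def]
  have L_nonneg: "eventually (\<lambda>m. 0 \<le> L m) U"
    using circle unfolding R_circle_def by (simp add: less_imp_le)
  have dist_c: "cone_dist U L (c t) (c u) = cone_pdist U L (x t) (x u)" for t u
    unfolding c_def by (rule cone_dist_cone_class[OF U L_nonneg loop(1) loop(1)])
  have "CAT0 (cone_carrier U (x 0) L) (cone_dist U L)"
    using cat unfolding x_def by simp
  then show False
  proof (rule CAT0_no_antipodal_loop)
    show "c t \<in> cone_carrier U (x 0) L" for t
      unfolding c_def cone_carrier_eq using loop(1) by blast
    show "c 1 = c 0"
      unfolding c_def loop(4) ..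
    show "cone_dist U L (c t) (c u) \<le> \<bar>t - u\<bar>" for t u
      unfolding dist_c by (rule loop(2))
    show "1/2 \<le> cone_dist U L (c p) (c (p + 1/2))" for p
      unfolding dist_c by (rule loop(3))
    show "cone_dist U L (c t) (c v) \<le> cone_dist U L (c t) (c u) + cone_dist U L (c u) (c v)" for t u v
      unfolding dist_c by (rule cone_pdist_triangle[OF U L_nonneg loop(1) loop(1) loop(1)])
    show "cone_dist U L (c t) (c u) = cone_dist U L (c u) (c t)" for t u
      unfolding dist_c by (rule cone_pdist_commute)
  qed
qed

theorem theorem6p1:
  fixes R :: real
  assumes "R \<ge> 0"
    and "rough_geodesic R TYPE('a::metric_space)"
    and "asymptotically_CAT0 TYPE('a)"
  shows "strongly_shortcut TYPE('a)"
proof (rule ccontr)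
  assume "\<not> strongly_shortcut TYPE('a)"
  then obtain r L and \<alpha> :: "nat \<Rightarrow> real \<Rightarrow> 'a" and K
    where circle: "\<And>n. R_circle (r n) (L n) (\<alpha> n)" and almost: "\<And>n. almost_isometric (K n) (L n) (\<alpha> n)"
      and K: "K \<longlonglongrightarrow> 1" and RL: "(\<lambda>n. r n / L n) \<longlonglongrightarrow> 0" and L: "filterlim L at_top sequentially"
    by (erule not_strongly_shortcut_circles)
  obtain U where U: "nonprincipal_ultrafilter U"
    using nonprincipal_ultrafilter_exists by blast
  have "CAT0 (cone_carrier U (\<lambda>m. \<alpha> m 0) L) (cone_dist U L)"
    using assms(3) U L unfolding asymptotically_CAT0_def by blast
  then show False
    by (rule CAT0_cone_no_rescaled_circles[OF U circle almost K RL])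
qed

end
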